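(* In the base model with AI prior $N(\mu_A,\sigma_A^2)$, define the societal bias $|\mathbb E[\theta^\star]-\mu_T|$ (with $\theta\sim N(\mu_T,\sigma_T^2)$) and the AI bias $|\mu_A-\mu_T|$. Then: (1) $|\mathbb E[\theta^\star]-\mu_T|\le|\mu_A-\mu_T|$; (2) $|\mathbb E[\theta^\star]-\mu_T|\to0$ as $\gamma\to0$ (for any $\Gamma$), and also as $\Gamma\to0$ (for any $\gamma$); (3) if $\Gamma=\infty$, then $|\mathbb E[\theta^\star]-\mu_T|\to|\mu_A-\mu_T|$ as $\gamma\to\infty$; (4) if $\Gamma=\infty$, the societal bias is non-decreasing in $\gamma$.
   Context: Base model. Fix $\mu_T\in\mathbb R$, $\sigma_T>0$, $\mu_A\in\mathbb R$, $\sigma_A>0$, $\gamma>0$ (cost of human–AI interaction) and $\Gamma\in(0,\infty]$ (utility cost of doing the task without AI). User preferences $\theta$ are distributed in the population as $N(\mu_T,\sigma_T^2)$ with density $\pi_T$. A user of type $\theta$ chooses a noise level $\sigma\in[0,\infty]$; the AI observes $s=\theta+\varepsilon$, $\varepsilon\sim N(0,\sigma^2)$, and outputs the posterior mean under the prior $N(\mu_A,\sigma_A^2)$: $\theta_A(s,\sigma)=\frac{\sigma_A^2}{\sigma_A^2+\sigma^2}s+\frac{\sigma^2}{\sigma_A^2+\sigma^2}\mu_A$ (with $\theta_A=\mu_A$ when $\sigma=\infty$). Fidelity error: $E(\theta,\sigma)=\mathbb E_{s\sim N(\theta,\sigma^2)}[(\theta_A(s,\sigma)-\theta)^2]$. Communication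 cost: $I(\sigma)=-\tfrac12\ln\frac{\sigma^2}{\sigma_T^2+\sigma^2}$, with $I(0)=+\infty$, $I(\infty)=0$. Loss: $L(\theta,\sigma)=E(\theta,\sigma)+\gamma I(\sigma)$, and $\sigma^\star(\theta)\in\arg\min_{\sigma\in[0,\infty]}L(\theta,\sigma)$. The user uses the AI iff $L(\theta,\sigma^\star(\theta))\le\Gamma$; the chosen output is $\theta^\star=\theta_A(s,\sigma^\star(\theta))$ with $s\sim N(\theta,\sigma^\star(\theta)^2)$ if she uses the AI, and $\theta^\star=\theta$ otherwise. $\Gamma=\infty$ means everyone uses the AI. $\mathbb E[\theta^\star]$ is taken over $\theta\sim\pi_T$ and $s$. *)

theory Defs
  imports "HOL-Probability.Probability"
begin

text \<open>Noise levels sigma range over [0, infinity], modelled as nonnegative extended reals.\<close>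

text \<open>Distribution of the signal s = theta + eps, eps ~ N(0, sigma^2), for finite sigma
  (degenerate point mass when sigma = 0).\<close>
definition signal_dist :: "real \<Rightarrow> ereal \<Rightarrow> real measure" where
  "signal_dist \<theta> \<sigma> =
     (if \<sigma> = 0 then return borel \<theta>
      else density lborel (normal_density \<theta> (real_of_ereal \<sigma>)))"

text \<open>AI output: posterior mean under prior N(muA, sigmaA^2); equals muA when sigma = infinity.\<close>
definition thetaA :: "real \<Rightarrow> real \<Rightarrow> real \<Rightarrow> ereal \<Rightarrow> real" where
  "thetaA \<mu>A \<sigma>A s \<sigma> =
     (if \<sigma> = \<infinity> then \<mu>A
      else (let v = (real_of_ereal \<sigma>)\<^sup>2 in
             \<sigma>A\<^sup>2 / (\<sigma>A\<^sup>2 + v) * s + v / (\<sigma>A\<^sup>2 + v) * \<mu>A))"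

definition fid_err :: "real \<Rightarrow> real \<Rightarrow> real \<Rightarrow> ereal \<Rightarrow> real" where
  "fid_err \<mu>A \<sigma>A \<theta> \<sigma> =
     (if \<sigma> = \<infinity> then (\<mu>A - \<theta>)\<^sup>2
      else \<integral> s. (thetaA \<mu>A \<sigma>A s \<sigma> - \<theta>)\<^sup>2 \<partial>signal_dist \<theta> \<sigma>)"

definition comm_cost :: "real \<Rightarrow> ereal \<Rightarrow> ereal" where
  "comm_cost \<sigma>T \<sigma> =
     (if \<sigma> = 0 then \<infinity>
      else if \<sigma> = \<infinity> then 0
      else ereal (- 1/2 * ln ((real_of_ereal \<sigma>)\<^sup>2 / (\<sigma>T\<^sup>2 + (real_of_ereal \<sigma>)\<^sup>2))))"

definition loss :: "real \<Rightarrow> real \<Rightarrow> real \<Rightarrow> real \<Rightarrow> real \<Rightarrow> ereal \<Rightarrow> ereal" where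
  "loss \<sigma>T \<mu>A \<sigma>A \<gamma> \<theta> \<sigma> = ereal (fid_err \<mu>A \<sigma>A \<theta> \<sigma>) + ereal \<gamma> * comm_cost \<sigma>T \<sigma>"

definition is_opt_noise :: "real \<Rightarrow> real \<Rightarrow> real \<Rightarrow> real \<Rightarrow> real \<Rightarrow> ereal \<Rightarrow> bool" where
  "is_opt_noise \<sigma>T \<mu>A \<sigma>A \<gamma> \<theta> \<sigma> \<longleftrightarrow>
     0 \<le> \<sigma> \<and> (\<forall>\<sigma>'. 0 \<le> \<sigma>' \<longrightarrow> loss \<sigma>T \<mu>A \<sigma>A \<gamma> \<theta> \<sigma> \<le> loss \<sigma>T \<mu>A \<sigma>A \<gamma> \<theta> \<sigma>')"

text \<open>Conditional mean of theta* given the user type theta, for a chosen noise level sig: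
  E_s[thetaA(s, sig)] if she uses the AI (L <= Gamma), theta otherwise.\<close>
definition cond_out_mean ::
  "real \<Rightarrow> real \<Rightarrow> real \<Rightarrow> real \<Rightarrow> ereal \<Rightarrow> real \<Rightarrow> ereal \<Rightarrow> real" where
  "cond_out_mean \<sigma>T \<mu>A \<sigma>A \<gamma> \<Gamma> \<theta> sig =
     (if loss \<sigma>T \<mu>A \<sigma>A \<gamma> \<theta> sig \<le> \<Gamma>
      then (if sig = \<infinity> then \<mu>A
            else \<integral> s. thetaA \<mu>A \<sigma>A s sig \<partial>signal_dist \<theta> sig)
      else \<theta>)"

definition mean_out ::
  "real \<Rightarrow> real \<Rightarrow> real \<Rightarrow> real \<Rightarrow> real \<Rightarrow> ereal \<Rightarrow> (real \<Rightarrow> ereal) \<Rightarrow> real" where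
  "mean_out \<mu>T \<sigma>T \<mu>A \<sigma>A \<gamma> \<Gamma> sel =
     (\<integral> \<theta>. cond_out_mean \<sigma>T \<mu>A \<sigma>A \<gamma> \<Gamma> \<theta> (sel \<theta>) \<partial>density lborel (normal_density \<mu>T \<sigma>T))"

definition soc_bias ::
  "real \<Rightarrow> real \<Rightarrow> real \<Rightarrow> real \<Rightarrow> real \<Rightarrow> ereal \<Rightarrow> (real \<Rightarrow> ereal) \<Rightarrow> real" where
  "soc_bias \<mu>T \<sigma>T \<mu>A \<sigma>A \<gamma> \<Gamma> sel = \<bar>mean_out \<mu>T \<sigma>T \<mu>A \<sigma>A \<gamma> \<Gamma> sel - \<mu>T\<bar>"

end

theory Submission
  imports Defs "HOL-Real_Asymp.Real_Asymp"
begin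

text \<open>
  A user of type \<open>\<theta>\<close> who uses the AI at noise level \<open>\<sigma> > 0\<close> gets an output with conditional
  mean \<open>\<theta> - w (\<theta> - \<mu>A)\<close>, where \<open>w = \<sigma>\<^sup>2 / (\<sigma>A\<^sup>2 + \<sigma>\<^sup>2) \<in> [0, 1]\<close> is the weight on the
  AI prior (and \<open>w = 0\<close> if she does not use it). Hence \<open>\<mu>T - E[\<theta>*] = \<integral> \<phi>(\<theta>) w(\<theta>) (\<theta> - \<mu>A) d\<theta>\<close>.

  The loss depends on \<open>\<theta>\<close> only through \<open>(\<theta> - \<mu>A)\<^sup>2\<close>, and comparing the optimal choices of two
  users (each could have chosen the other's noise level) shows that \<open>w\<close> is antitone in \<open>|\<theta> - \<mu>A|\<close>.
  So \<open>w\<close> is symmetric about \<open>\<mu>A\<close> outside a countable set, and folding the integral at \<open>\<mu>A\<close>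
  writes it as \<open>\<onehalf> \<integral> w(\<mu>A + x) x (\<phi>(\<mu>A + x) - \<phi>(\<mu>A - x)) dx\<close>, whose kernel has the constant sign of
  \<open>\<mu>T - \<mu>A\<close>. The bias is therefore monotone in the weights: weight 1 gives the AI bias, which
  proves (1), and the same exchange argument between two values of \<open>\<gamma>\<close> shows that the weights
  grow with \<open>\<gamma>\<close>, which proves (4).

  For the limits, comparing with the noise level \<open>\<surd>\<gamma>\<close> bounds \<open>w |\<theta> - \<mu>A|\<close> by
  \<open>\<gamma> |\<theta> - \<mu>A| / \<sigma>A\<^sup>2 + o(1)\<close> as \<open>\<gamma> \<rightarrow> 0\<close>; a loss of at most \<open>\<Gamma>\<close> bounds it by \<open>\<surd>\<Gamma>\<close>; and comparing
  with \<open>\<sigma> = \<infinity>\<close> gives \<open>1 - w = O(|\<theta> - \<mu>A|\<^sup>2 / \<gamma>)\<close> as \<open>\<gamma> \<rightarrow> \<infinity>\<close>.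
\<close>

section \<open>Gaussian integrals\<close>

lemma integral_normal_affine:
  assumes "\<sigma> > 0"
  shows "(\<integral>x. a * x + b \<partial>density lborel (normal_density \<mu> \<sigma>)) = a * \<mu> + b"
proof -
  have "(\<integral>x. a * x + b \<partial>density lborel (normal_density \<mu> \<sigma>))
      = (\<integral>x. a * (normal_density \<mu> \<sigma> x * x) + b * normal_density \<mu> \<sigma> x \<partial>lborel)"
    by (subst integral_density) (auto simp: algebra_simps)
  also have "\<dots> = a * \<mu> + b"
    using assms integrable_normal_moment_nz_1 integral_normal_moment_nz_1 by simp
  finally show ?thesis .
qed

lemma integral_normal_affine_square:
  assumes "\<sigma> > 0"
  shows "(\<integral>x. (a * (x - \<mu>) + b)\<^sup>2 \<partial>density lborel (normal_density \<mu> \<sigma>)) = a\<^sup>2 * \<sigma>\<^sup>2 + b\<^sup>2"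
proof -
  have "(\<integral>x. (a * (x - \<mu>) + b)\<^sup>2 \<partial>density lborel (normal_density \<mu> \<sigma>))
      = (\<integral>x. a\<^sup>2 * (normal_density \<mu> \<sigma> x * (x - \<mu>) ^ (2 * 1))
            + 2 * a * b * (normal_density \<mu> \<sigma> x * (x - \<mu>) ^ (2 * 0 + 1))
            + b\<^sup>2 * normal_density \<mu> \<sigma> x \<partial>lborel)"
    by (subst integral_density) (auto simp: algebra_simps power2_eq_square)
  also have "\<dots> = a\<^sup>2 * \<sigma>\<^sup>2 + b\<^sup>2"
    using assms integrable_normal_moment[of \<sigma> \<mu> "2 * 1"] integrable_normal_moment[of \<sigma> \<mu> "2 * 0 + 1"]
      integral_normal_moment_even[of \<sigma> \<mu> 1] integral_normal_moment_odd[of \<sigma> \<mu> 0]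
    by (simp add: power2_eq_square)
  finally show ?thesis .
qed

lemma integrable_normal_abs_power:
  assumes "\<sigma> > 0"
  shows "integrable lborel (\<lambda>x. normal_density \<mu> \<sigma> x * \<bar>x - c\<bar> ^ k)"
proof (rule Bochner_Integration.integrable_bound)
  show "integrable lborel (\<lambda>x. 2 ^ k * (normal_density \<mu> \<sigma> x * \<bar>x - \<mu>\<bar> ^ k)
      + 2 ^ k * \<bar>\<mu> - c\<bar> ^ k * normal_density \<mu> \<sigma> x)"
    using assms integrable_normal_moment_abs by auto
  show "AE x in lborel. norm (normal_density \<mu> \<sigma> x * \<bar>x - c\<bar> ^ k)
      \<le> norm (2 ^ k * (normal_density \<mu> \<sigma> x * \<bar>x - \<mu>\<bar> ^ k)
          + 2 ^ k * \<bar>\<mu> - c\<bar> ^ k * normal_density \<mu> \<sigma> x)"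
  proof (rule AE_I2)
    fix x
    have "\<bar>x - c\<bar> ^ k \<le> (2 * max \<bar>x - \<mu>\<bar> \<bar>\<mu> - c\<bar>) ^ k"
      using abs_triangle_ineq[of "x - \<mu>" "\<mu> - c"] by (intro power_mono) (auto simp: max_def)
    also have "\<dots> \<le> 2 ^ k * (\<bar>x - \<mu>\<bar> ^ k + \<bar>\<mu> - c\<bar> ^ k)"
      by (simp add: power_mult_distrib max_def)
    finally have "normal_density \<mu> \<sigma> x * \<bar>x - c\<bar> ^ k
        \<le> normal_density \<mu> \<sigma> x * (2 ^ k * (\<bar>x - \<mu>\<bar> ^ k + \<bar>\<mu> - c\<bar> ^ k))"
      by (rule mult_left_mono) simp
    then show "norm (normal_density \<mu> \<sigma> x * \<bar>x - c\<bar> ^ k)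
      \<le> norm (2 ^ k * (normal_density \<mu> \<sigma> x * \<bar>x - \<mu>\<bar> ^ k)
          + 2 ^ k * \<bar>\<mu> - c\<bar> ^ k * normal_density \<mu> \<sigma> x)"
      by (simp add: algebra_simps)
  qed
qed simp

lemma integrable_normal_bounded_times_deviation:
  assumes "\<sigma> > 0" and [measurable]: "f \<in> borel_measurable borel" and "\<And>\<theta>. \<bar>f \<theta>\<bar> \<le> 1"
  shows "integrable lborel (\<lambda>\<theta>. normal_density \<mu> \<sigma> \<theta> * (f \<theta> * (\<theta> - c)))"
proof (rule Bochner_Integration.integrable_bound)
  show "integrable lborel (\<lambda>\<theta>. normal_density \<mu> \<sigma> \<theta> * \<bar>\<theta> - c\<bar> ^ 1)"
    using assms(1) by (rule integrable_normal_abs_power)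
  show "AE \<theta> in lborel. norm (normal_density \<mu> \<sigma> \<theta> * (f \<theta> * (\<theta> - c)))
      \<le> norm (normal_density \<mu> \<sigma> \<theta> * \<bar>\<theta> - c\<bar> ^ 1)"
    using assms(3) by (intro AE_I2) (simp add: abs_mult mult_left_mono mult_left_le_one_le)
qed simp

lemma integral_normal_deviation:
  assumes "\<sigma> > 0"
  shows "(\<integral>\<theta>. normal_density \<mu> \<sigma> \<theta> * (\<theta> - c) \<partial>lborel) = \<mu> - c"
proof -
  have "(\<integral>\<theta>. normal_density \<mu> \<sigma> \<theta> * (\<theta> - c) \<partial>lborel)
      = (\<integral>\<theta>. normal_density \<mu> \<sigma> \<theta> * \<theta> - c * normal_density \<mu> \<sigma> \<theta> \<partial>lborel)"
    by (simp add: algebra_simps)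
  also have "\<dots> = \<mu> - c"
    using assms integrable_normal_moment_nz_1 integral_normal_moment_nz_1 integral_normal_density
    by simp
  finally show ?thesis .
qed

definition tilt :: "real \<Rightarrow> real \<Rightarrow> real \<Rightarrow> real \<Rightarrow> real" where
  "tilt \<mu> \<sigma> c x = x * (normal_density \<mu> \<sigma> (c + x) - normal_density \<mu> \<sigma> (c - x))"

lemma normal_density_le_reflect:
  assumes "0 \<le> x * (\<mu> - c)"
  shows "normal_density \<mu> \<sigma> (c - x) \<le> normal_density \<mu> \<sigma> (c + x)"
proof -
  have "(c + x - \<mu>)\<^sup>2 \<le> (c - x - \<mu>)\<^sup>2"
    using assms by (simp add: power2_eq_square algebra_simps)
  then show ?thesis
    unfolding normal_density_def by (auto simp: divide_simps mult_less_0_iff intro!: mult_left_mono)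
qed

lemma tilt_sign: "0 \<le> (if c \<le> \<mu> then 1 else - 1) * tilt \<mu> \<sigma> c x"
proof -
  have "normal_density \<mu> \<sigma> (c - x) \<le> normal_density \<mu> \<sigma> (c + x)" if "0 \<le> x * (\<mu> - c)"
    using that by (rule normal_density_le_reflect)
  moreover have "normal_density \<mu> \<sigma> (c + x) \<le> normal_density \<mu> \<sigma> (c - x)" if "x * (\<mu> - c) \<le> 0"
    using that normal_density_le_reflect[of "- x" \<mu> c \<sigma>] by simp
  ultimately show ?thesis
    unfolding tilt_def
    by (cases "0 \<le> x"; cases "c \<le> \<mu>")
       (auto simp: mult_nonneg_nonpos mult_nonpos_nonneg mult_nonpos_nonpos mult_le_0_iff)
qed

lemma integral_normal_fold:
  assumes "\<sigma> > 0" and [measurable]: "f \<in> borel_measurable borel" and "\<And>\<theta>. \<bar>f \<theta>\<bar> \<le> 1"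
    and reflect: "AE x in lborel. f (c - x) = f (c + x)"
  shows "(\<integral>\<theta>. normal_density \<mu> \<sigma> \<theta> * (f \<theta> * (\<theta> - c)) \<partial>lborel)
           = (\<integral>x. f (c + x) * tilt \<mu> \<sigma> c x \<partial>lborel) / 2"
    and "integrable lborel (\<lambda>x. f (c + x) * tilt \<mu> \<sigma> c x)"
proof -
  define F where "F \<theta> = normal_density \<mu> \<sigma> \<theta> * (f \<theta> * (\<theta> - c))" for \<theta>
  have "integrable lborel F"
    unfolding F_def using assms(1-3) by (rule integrable_normal_bounded_times_deviation)
  have int_pos: "integrable lborel (\<lambda>x. F (c + 1 * x))"
    using \<open>integrable lborel F\<close> by (rule lborel_integrable_real_affine) simp
  have int_neg: "integrable lborel (\<lambda>x. F (c + (- 1) * x))"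
    using \<open>integrable lborel F\<close> by (rule lborel_integrable_real_affine) simp
  have "AE x in lborel. F (c + 1 * x) + F (c + (- 1) * x) = f (c + x) * tilt \<mu> \<sigma> c x"
    using reflect by eventually_elim (simp add: F_def tilt_def algebra_simps)
  note fold = integrable_cong_AE[OF _ _ this] integral_cong_AE[OF _ _ this]
  show "integrable lborel (\<lambda>x. f (c + x) * tilt \<mu> \<sigma> c x)"
    using fold(1) int_pos int_neg by (auto simp: F_def tilt_def)
  have "2 * integral\<^sup>L lborel F = (\<integral>x. F (c + 1 * x) + F (c + (- 1) * x) \<partial>lborel)"
    using int_pos int_neg lborel_integral_real_affine[of 1 F c] lborel_integral_real_affine[of "- 1" F c]
    by simp
  also have "\<dots> = (\<integral>x. f (c + x) * tilt \<mu> \<sigma> c x \<partial>lborel)"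
    using fold(2) by (simp add: F_def tilt_def)
  finally show "integral\<^sup>L lborel F = (\<integral>x. f (c + x) * tilt \<mu> \<sigma> c x \<partial>lborel) / 2"
    by simp
qed

lemma abs_integral_normal_deviation_mono:
  assumes "\<sigma> > 0"
    and [measurable]: "f \<in> borel_measurable borel" "g \<in> borel_measurable borel"
    and "\<And>\<theta>. 0 \<le> f \<theta>" and "\<And>\<theta>. f \<theta> \<le> g \<theta>" and "\<And>\<theta>. g \<theta> \<le> 1"
    and "AE x in lborel. f (c - x) = f (c + x)" and "AE x in lborel. g (c - x) = g (c + x)"
  shows "\<bar>\<integral>\<theta>. normal_density \<mu> \<sigma> \<theta> * (f \<theta> * (\<theta> - c)) \<partial>lborel\<bar>
           \<le> \<bar>\<integral>\<theta>. normal_density \<mu> \<sigma> \<theta> * (g \<theta> * (\<theta> - c)) \<partial>lborel\<bar>"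
proof -
  define \<epsilon> :: real where "\<epsilon> = (if c \<le> \<mu> then 1 else - 1)"
  have "\<bar>f \<theta>\<bar> \<le> 1" and "\<bar>g \<theta>\<bar> \<le> 1" for \<theta>
    using assms(4-6)[of \<theta>] by auto
  note fold_f = integral_normal_fold[OF assms(1,2) this(1) assms(7)]
    and fold_g = integral_normal_fold[OF assms(1,3) this(2) assms(8)]
  have sign: "0 \<le> \<epsilon> * tilt \<mu> \<sigma> c x" for x
    unfolding \<epsilon>_def by (rule tilt_sign)
  have "0 \<le> (\<integral>x. f (c + x) * (\<epsilon> * tilt \<mu> \<sigma> c x) \<partial>lborel)"
    using sign assms(4) by (intro Bochner_Integration.integral_nonneg) simp
  moreover have "(\<integral>x. f (c + x) * (\<epsilon> * tilt \<mu> \<sigma> c x) \<partial>lborel)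
      \<le> (\<integral>x. g (c + x) * (\<epsilon> * tilt \<mu> \<sigma> c x) \<partial>lborel)"
  proof (rule integral_mono)
    show "integrable lborel (\<lambda>x. f (c + x) * (\<epsilon> * tilt \<mu> \<sigma> c x))"
      and "integrable lborel (\<lambda>x. g (c + x) * (\<epsilon> * tilt \<mu> \<sigma> c x))"
      using fold_f(2) fold_g(2) by (simp_all add: mult.left_commute[of _ \<epsilon>])
    show "f (c + x) * (\<epsilon> * tilt \<mu> \<sigma> c x) \<le> g (c + x) * (\<epsilon> * tilt \<mu> \<sigma> c x)" for x
      using assms(5) sign by (rule mult_right_mono)
  qed
  moreover have "\<bar>y\<bar> = \<epsilon> * y" if "0 \<le> \<epsilon> * y" for y
    using that abs_mult[of \<epsilon> y] by (simp add: \<epsilon>_def)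
  ultimately show ?thesis
    unfolding fold_f(1) fold_g(1) by (simp add: mult.left_commute[of _ \<epsilon>])
qed

section \<open>The model in closed form\<close>

definition prior_weight :: "real \<Rightarrow> ereal \<Rightarrow> real" where
  "prior_weight \<sigma>A \<sigma> =
     (if \<sigma> = \<infinity> then 1 else (real_of_ereal \<sigma>)\<^sup>2 / (\<sigma>A\<^sup>2 + (real_of_ereal \<sigma>)\<^sup>2))"

definition noise_error :: "real \<Rightarrow> ereal \<Rightarrow> real" where
  "noise_error \<sigma>A \<sigma> = (if \<sigma> = \<infinity> then 0 else (1 - prior_weight \<sigma>A \<sigma>)\<^sup>2 * (real_of_ereal \<sigma>)\<^sup>2)"

definition info_cost :: "real \<Rightarrow> ereal \<Rightarrow> real" where
  "info_cost \<sigma>T \<sigma> =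
     (if \<sigma> = \<infinity> then 0
      else - 1/2 * ln ((real_of_ereal \<sigma>)\<^sup>2 / (\<sigma>T\<^sup>2 + (real_of_ereal \<sigma>)\<^sup>2)))"

definition real_loss :: "real \<Rightarrow> real \<Rightarrow> real \<Rightarrow> real \<Rightarrow> real \<Rightarrow> ereal \<Rightarrow> real" where
  "real_loss \<sigma>T \<mu>A \<sigma>A \<gamma> \<theta> \<sigma> =
     (prior_weight \<sigma>A \<sigma>)\<^sup>2 * (\<theta> - \<mu>A)\<^sup>2 + noise_error \<sigma>A \<sigma> + \<gamma> * info_cost \<sigma>T \<sigma>"

lemma prior_weight_measurable [measurable]: "prior_weight \<sigma>A \<in> borel_measurable borel"
  unfolding prior_weight_def by measurable

lemma noise_error_measurable [measurable]: "noise_error \<sigma>A \<in> borel_measurable borel"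
  unfolding noise_error_def by measurable

lemma info_cost_measurable [measurable]: "info_cost \<sigma>T \<in> borel_measurable borel"
  unfolding info_cost_def by measurable

lemma prior_weight_finite: "prior_weight \<sigma>A (ereal s) = s\<^sup>2 / (\<sigma>A\<^sup>2 + s\<^sup>2)"
  by (simp add: prior_weight_def)

lemma thetaA_finite_eq:
  assumes "\<sigma>A > 0"
  shows "thetaA \<mu>A \<sigma>A x (ereal s)
           = (1 - prior_weight \<sigma>A (ereal s)) * x + prior_weight \<sigma>A (ereal s) * \<mu>A"
  using assms by (simp add: thetaA_def prior_weight_def Let_def divide_simps)

lemma fid_err_eq:
  assumes "\<sigma>A > 0" and "\<sigma> > 0"
  shows "fid_err \<mu>A \<sigma>A \<theta> \<sigma> = (prior_weight \<sigma>A \<sigma>)\<^sup>2 * (\<theta> - \<mu>A)\<^sup>2 + noise_error \<sigma>A \<sigma>"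
proof (cases \<sigma>)
  case (real s)
  let ?t = "prior_weight \<sigma>A (ereal s)"
  have "s > 0"
    using assms(2) real by simp
  have "thetaA \<mu>A \<sigma>A x (ereal s) - \<theta> = (1 - ?t) * (x - \<theta>) + ?t * (\<mu>A - \<theta>)" for x
    using thetaA_finite_eq[OF assms(1)] by (simp add: algebra_simps)
  then have "fid_err \<mu>A \<sigma>A \<theta> \<sigma>
      = (\<integral>x. ((1 - ?t) * (x - \<theta>) + ?t * (\<mu>A - \<theta>))\<^sup>2 \<partial>density lborel (normal_density \<theta> s))"
    using real \<open>s > 0\<close> by (simp add: fid_err_def signal_dist_def)
  also have "\<dots> = (1 - ?t)\<^sup>2 * s\<^sup>2 + (?t * (\<mu>A - \<theta>))\<^sup>2"
    using \<open>s > 0\<close> by (rule integral_normal_affine_square)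
  finally show ?thesis
    using real by (simp add: noise_error_def power_mult_distrib power2_commute)
qed (use assms(2) in \<open>auto simp: fid_err_def prior_weight_def noise_error_def power2_commute\<close>)

lemma loss_eq_real_loss:
  assumes "\<sigma>A > 0" and "\<sigma> > 0"
  shows "loss \<sigma>T \<mu>A \<sigma>A \<gamma> \<theta> \<sigma> = ereal (real_loss \<sigma>T \<mu>A \<sigma>A \<gamma> \<theta> \<sigma>)"
  using assms(2)
  by (auto simp: loss_def fid_err_eq[OF assms] real_loss_def comm_cost_def info_cost_def)

lemma cond_out_mean_eq:
  assumes "\<sigma>A > 0" and "\<sigma> > 0"
  shows "cond_out_mean \<sigma>T \<mu>A \<sigma>A \<gamma> \<Gamma> \<theta> \<sigma> =
     \<theta> - (if loss \<sigma>T \<mu>A \<sigma>A \<gamma> \<theta> \<sigma> \<le> \<Gamma> then prior_weight \<sigma>A \<sigma> else 0) * (\<theta> - \<mu>A)"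
proof (cases \<sigma>)
  case (real s)
  let ?t = "prior_weight \<sigma>A (ereal s)"
  have "s > 0"
    using assms(2) real by simp
  have "(\<integral>x. thetaA \<mu>A \<sigma>A x (ereal s) \<partial>signal_dist \<theta> (ereal s))
      = (\<integral>x. (1 - ?t) * x + ?t * \<mu>A \<partial>density lborel (normal_density \<theta> s))"
    using \<open>s > 0\<close> by (simp add: signal_dist_def thetaA_finite_eq[OF assms(1)])
  also have "\<dots> = (1 - ?t) * \<theta> + ?t * \<mu>A"
    using \<open>s > 0\<close> by (rule integral_normal_affine)
  finally show ?thesis
    using real by (simp add: cond_out_mean_def algebra_simps)
qed (use assms(2) in \<open>auto simp: cond_out_mean_def prior_weight_def algebra_simps\<close>)

lemma divide_add_le_divide_add_iff:
  fixes c v w :: real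
  assumes "c > 0" and "v \<ge> 0" and "w \<ge> 0"
  shows "v / (c + v) \<le> w / (c + w) \<longleftrightarrow> v \<le> w"
proof -
  have "v / (c + v) \<le> w / (c + w) \<longleftrightarrow> v * (c + w) \<le> w * (c + v)"
    using assms by (simp add: divide_simps)
  also have "\<dots> \<longleftrightarrow> c * v \<le> c * w"
    by (simp add: algebra_simps)
  finally show ?thesis
    using assms(1) by simp
qed

lemma noise_error_nonneg: "0 \<le> noise_error \<sigma>A \<sigma>"
  by (simp add: noise_error_def)

locale bias_model =
  fixes \<sigma>T \<mu>A \<sigma>A :: real
  assumes \<sigma>T_pos: "\<sigma>T > 0" and \<sigma>A_pos: "\<sigma>A > 0"
begin

lemma prior_weight_nonneg: "\<sigma> > 0 \<Longrightarrow> 0 \<le> prior_weight \<sigma>A \<sigma>"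
  and prior_weight_le_one: "\<sigma> > 0 \<Longrightarrow> prior_weight \<sigma>A \<sigma> \<le> 1"
  using \<sigma>A_pos by (auto simp: prior_weight_def divide_simps add_pos_nonneg)

lemma info_cost_finite:
  assumes "s > 0"
  shows "info_cost \<sigma>T (ereal s) = - 1/2 * ln (s\<^sup>2 / (\<sigma>T\<^sup>2 + s\<^sup>2))"
    and "0 < s\<^sup>2 / (\<sigma>T\<^sup>2 + s\<^sup>2)" and "s\<^sup>2 / (\<sigma>T\<^sup>2 + s\<^sup>2) < 1"
  using assms \<sigma>T_pos by (auto simp: info_cost_def divide_simps add_pos_nonneg)

lemma info_cost_nonneg:
  assumes "\<sigma> > 0"
  shows "0 \<le> info_cost \<sigma>T \<sigma>"
proof (cases \<sigma>)
  case (real s)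
  then show ?thesis
    using assms info_cost_finite[of s] by simp
qed (simp_all add: info_cost_def)

lemma one_minus_prior_weight_le_info_cost:
  assumes "\<sigma> > 0"
  shows "1 - prior_weight \<sigma>A \<sigma> \<le> 2 * (\<sigma>A\<^sup>2 + \<sigma>T\<^sup>2) / \<sigma>T\<^sup>2 * info_cost \<sigma>T \<sigma>"
proof (cases \<sigma>)
  case (real s)
  let ?q = "s\<^sup>2 / (\<sigma>T\<^sup>2 + s\<^sup>2)"
  have "s > 0"
    using assms real by simp
  have "\<sigma>A\<^sup>2 * (\<sigma>T\<^sup>2 + s\<^sup>2) \<le> (\<sigma>A\<^sup>2 + \<sigma>T\<^sup>2) * (\<sigma>A\<^sup>2 + s\<^sup>2)"
    by (simp add: algebra_simps)
  then have "1 - prior_weight \<sigma>A \<sigma> \<le> (\<sigma>A\<^sup>2 + \<sigma>T\<^sup>2) / \<sigma>T\<^sup>2 * (1 - ?q)"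
    using real \<sigma>A_pos \<sigma>T_pos
    by (simp add: prior_weight_finite divide_simps add_pos_nonneg)
  also have "\<dots> \<le> (\<sigma>A\<^sup>2 + \<sigma>T\<^sup>2) / \<sigma>T\<^sup>2 * (- ln ?q)"
    using ln_le_minus_one[of ?q] info_cost_finite[OF \<open>s > 0\<close>]
    by (intro mult_left_mono) auto
  also have "\<dots> = (\<sigma>A\<^sup>2 + \<sigma>T\<^sup>2) / \<sigma>T\<^sup>2 * (2 * info_cost \<sigma>T \<sigma>)"
    using real info_cost_finite(1)[OF \<open>s > 0\<close>] by simp
  finally show ?thesis
    by (simp add: algebra_simps)
qed (use assms in \<open>simp_all add: prior_weight_def info_cost_def\<close>)

lemma prior_weight_mono_info_cost:
  assumes "\<sigma>1 > 0" and "\<sigma>2 > 0" and "info_cost \<sigma>T \<sigma>2 \<le> info_cost \<sigma>T \<sigma>1"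
  shows "prior_weight \<sigma>A \<sigma>1 \<le> prior_weight \<sigma>A \<sigma>2"
proof (cases \<sigma>2)
  case (real s2)
  then have "s2 > 0"
    using assms(2) by simp
  show ?thesis
  proof (cases \<sigma>1)
    case (real s1)
    then have "s1 > 0"
      using assms(1) by simp
    have "s1\<^sup>2 / (\<sigma>T\<^sup>2 + s1\<^sup>2) \<le> s2\<^sup>2 / (\<sigma>T\<^sup>2 + s2\<^sup>2)"
      using assms(3) real \<open>\<sigma>2 = ereal s2\<close> info_cost_finite[OF \<open>s1 > 0\<close>] info_cost_finite[OF \<open>s2 > 0\<close>]
      by simp
    then have "s1\<^sup>2 \<le> s2\<^sup>2"
      using \<sigma>T_pos by (simp add: divide_add_le_divide_add_iff)
    then show ?thesis
      using real \<open>\<sigma>2 = ereal s2\<close> \<sigma>A_pos by (simp add: prior_weight_finite divide_add_le_divide_add_iff)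
  next
    case PInf
    then show ?thesis
      using assms(3) real info_cost_finite[OF \<open>s2 > 0\<close>] by (simp add: info_cost_def)
  qed (use assms(1) in simp)
qed (use assms(2) prior_weight_le_one[OF assms(1)] in \<open>simp_all add: prior_weight_def\<close>)

lemma prior_weight_dist_le_sqrt_real_loss:
  assumes "\<sigma> > 0" and "\<gamma> \<ge> 0"
  shows "prior_weight \<sigma>A \<sigma> * \<bar>\<theta> - \<mu>A\<bar> \<le> sqrt (real_loss \<sigma>T \<mu>A \<sigma>A \<gamma> \<theta> \<sigma>)"
proof (rule real_le_rsqrt)
  show "(prior_weight \<sigma>A \<sigma> * \<bar>\<theta> - \<mu>A\<bar>)\<^sup>2 \<le> real_loss \<sigma>T \<mu>A \<sigma>A \<gamma> \<theta> \<sigma>"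
    using noise_error_nonneg[of \<sigma>A \<sigma>] info_cost_nonneg[OF assms(1)] assms(2)
    by (simp add: real_loss_def power_mult_distrib)
qed

lemma real_loss_infinity: "real_loss \<sigma>T \<mu>A \<sigma>A \<gamma> \<theta> \<infinity> = (\<theta> - \<mu>A)\<^sup>2"
  by (simp add: real_loss_def prior_weight_def noise_error_def info_cost_def)

lemma opt_noise_pos:
  assumes "\<gamma> > 0" and "is_opt_noise \<sigma>T \<mu>A \<sigma>A \<gamma> \<theta> \<sigma>"
  shows "\<sigma> > 0"
proof -
  have "loss \<sigma>T \<mu>A \<sigma>A \<gamma> \<theta> \<sigma> \<le> loss \<sigma>T \<mu>A \<sigma>A \<gamma> \<theta> \<infinity>"
    using assms(2) by (simp add: is_opt_noise_def)
  moreover have "loss \<sigma>T \<mu>A \<sigma>A \<gamma> \<theta> \<infinity> < \<infinity>"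
    using loss_eq_real_loss[OF \<sigma>A_pos] by simp
  moreover have "loss \<sigma>T \<mu>A \<sigma>A \<gamma> \<theta> 0 = \<infinity>"
    using assms(1) by (simp add: loss_def comm_cost_def)
  ultimately show ?thesis
    using assms(2) by (auto simp: is_opt_noise_def order.order_iff_strict)
qed

lemma opt_noise_real_loss_le:
  assumes "\<gamma> > 0" and "is_opt_noise \<sigma>T \<mu>A \<sigma>A \<gamma> \<theta> \<sigma>" and "\<sigma>' > 0"
  shows "real_loss \<sigma>T \<mu>A \<sigma>A \<gamma> \<theta> \<sigma> \<le> real_loss \<sigma>T \<mu>A \<sigma>A \<gamma> \<theta> \<sigma>'"
proof -
  have "loss \<sigma>T \<mu>A \<sigma>A \<gamma> \<theta> \<sigma> \<le> loss \<sigma>T \<mu>A \<sigma>A \<gamma> \<theta> \<sigma>'"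
    using assms(2,3) by (simp add: is_opt_noise_def)
  then show ?thesis
    using loss_eq_real_loss[OF \<sigma>A_pos opt_noise_pos[OF assms(1,2)]] loss_eq_real_loss[OF \<sigma>A_pos assms(3)]
    by simp
qed

lemma prior_weight_opt_antitone:
  assumes "\<gamma> > 0"
    and opt1: "is_opt_noise \<sigma>T \<mu>A \<sigma>A \<gamma> \<theta>1 \<sigma>1" and opt2: "is_opt_noise \<sigma>T \<mu>A \<sigma>A \<gamma> \<theta>2 \<sigma>2"
    and closer: "\<bar>\<theta>1 - \<mu>A\<bar> < \<bar>\<theta>2 - \<mu>A\<bar>"
  shows "prior_weight \<sigma>A \<sigma>2 \<le> prior_weight \<sigma>A \<sigma>1"
proof -
  note pos1 = opt_noise_pos[OF assms(1) opt1] and pos2 = opt_noise_pos[OF assms(1) opt2]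
  have "(prior_weight \<sigma>A \<sigma>2)\<^sup>2 * ((\<theta>2 - \<mu>A)\<^sup>2 - (\<theta>1 - \<mu>A)\<^sup>2)
      \<le> (prior_weight \<sigma>A \<sigma>1)\<^sup>2 * ((\<theta>2 - \<mu>A)\<^sup>2 - (\<theta>1 - \<mu>A)\<^sup>2)"
    using opt_noise_real_loss_le[OF assms(1) opt1 pos2] opt_noise_real_loss_le[OF assms(1) opt2 pos1]
    by (simp add: real_loss_def algebra_simps)
  moreover have "(\<theta>1 - \<mu>A)\<^sup>2 < (\<theta>2 - \<mu>A)\<^sup>2"
    using closer by (simp add: abs_le_square_iff flip: not_le)
  ultimately have "(prior_weight \<sigma>A \<sigma>2)\<^sup>2 \<le> (prior_weight \<sigma>A \<sigma>1)\<^sup>2"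
    by simp
  then show ?thesis
    using prior_weight_nonneg[OF pos1] prior_weight_nonneg[OF pos2] by (simp add: power2_le_iff_abs_le)
qed

lemma prior_weight_opt_mono_gamma:
  assumes "0 < \<gamma>1" and "\<gamma>1 < \<gamma>2"
    and opt1: "is_opt_noise \<sigma>T \<mu>A \<sigma>A \<gamma>1 \<theta> \<sigma>1" and opt2: "is_opt_noise \<sigma>T \<mu>A \<sigma>A \<gamma>2 \<theta> \<sigma>2"
  shows "prior_weight \<sigma>A \<sigma>1 \<le> prior_weight \<sigma>A \<sigma>2"
proof -
  have "\<gamma>2 > 0"
    using assms(1,2) by simp
  note pos1 = opt_noise_pos[OF assms(1) opt1] and pos2 = opt_noise_pos[OF \<open>\<gamma>2 > 0\<close> opt2]
  have "(\<gamma>2 - \<gamma>1) * info_cost \<sigma>T \<sigma>2 \<le> (\<gamma>2 - \<gamma>1) * info_cost \<sigma>T \<sigma>1"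
    using opt_noise_real_loss_le[OF assms(1) opt1 pos2] opt_noise_real_loss_le[OF \<open>\<gamma>2 > 0\<close> opt2 pos1]
    by (simp add: real_loss_def algebra_simps)
  then have "info_cost \<sigma>T \<sigma>2 \<le> info_cost \<sigma>T \<sigma>1"
    using assms(2) by simp
  then show ?thesis
    by (rule prior_weight_mono_info_cost[OF pos1 pos2])
qed

lemma prior_weight_opt_large_gamma:
  assumes "\<gamma> > 0" and opt: "is_opt_noise \<sigma>T \<mu>A \<sigma>A \<gamma> \<theta> \<sigma>"
  shows "(1 - prior_weight \<sigma>A \<sigma>) * \<bar>\<theta> - \<mu>A\<bar>
           \<le> 2 * (\<sigma>A\<^sup>2 + \<sigma>T\<^sup>2) / \<sigma>T\<^sup>2 * \<bar>\<theta> - \<mu>A\<bar> ^ 3 / \<gamma>"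
proof -
  let ?K = "2 * (\<sigma>A\<^sup>2 + \<sigma>T\<^sup>2) / \<sigma>T\<^sup>2"
  note pos = opt_noise_pos[OF assms]
  have "\<gamma> * info_cost \<sigma>T \<sigma> \<le> real_loss \<sigma>T \<mu>A \<sigma>A \<gamma> \<theta> \<sigma>"
    using noise_error_nonneg[of \<sigma>A \<sigma>] by (simp add: real_loss_def)
  also have "\<dots> \<le> (\<theta> - \<mu>A)\<^sup>2"
    using opt_noise_real_loss_le[OF assms, of \<infinity>] by (simp add: real_loss_infinity)
  finally have cost_le: "info_cost \<sigma>T \<sigma> \<le> \<bar>\<theta> - \<mu>A\<bar>\<^sup>2 / \<gamma>"
    using assms(1) by (simp add: field_simps)
  have "1 - prior_weight \<sigma>A \<sigma> \<le> ?K * info_cost \<sigma>T \<sigma>"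
    by (rule one_minus_prior_weight_le_info_cost[OF pos])
  also have "\<dots> \<le> ?K * (\<bar>\<theta> - \<mu>A\<bar>\<^sup>2 / \<gamma>)"
    using cost_le by (rule mult_left_mono) simp
  finally have "(1 - prior_weight \<sigma>A \<sigma>) * \<bar>\<theta> - \<mu>A\<bar> \<le> ?K * (\<bar>\<theta> - \<mu>A\<bar>\<^sup>2 / \<gamma>) * \<bar>\<theta> - \<mu>A\<bar>"
    by (rule mult_right_mono) simp
  then show ?thesis
    by (simp add: power2_eq_square power3_eq_cube)
qed

lemma real_loss_sqrt_le:
  assumes "\<gamma> > 0"
  shows "real_loss \<sigma>T \<mu>A \<sigma>A \<gamma> \<theta> (ereal (sqrt \<gamma>))
           \<le> (\<gamma> / \<sigma>A\<^sup>2 * \<bar>\<theta> - \<mu>A\<bar>)\<^sup>2 + \<gamma> * (1 - ln (\<gamma> / (\<sigma>T\<^sup>2 + \<gamma>)) / 2)"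
proof -
  let ?w = "prior_weight \<sigma>A (ereal (sqrt \<gamma>))"
  have "?w = \<gamma> / (\<sigma>A\<^sup>2 + \<gamma>)"
    using \<sigma>A_pos assms by (simp add: prior_weight_finite)
  also have "\<dots> \<le> \<gamma> / \<sigma>A\<^sup>2"
    using \<sigma>A_pos assms by (intro divide_left_mono) (auto simp: add_pos_pos)
  finally have "(?w * \<bar>\<theta> - \<mu>A\<bar>)\<^sup>2 \<le> (\<gamma> / \<sigma>A\<^sup>2 * \<bar>\<theta> - \<mu>A\<bar>)\<^sup>2"
    using prior_weight_nonneg[of "ereal (sqrt \<gamma>)"] assms
    by (intro power_mono mult_right_mono) auto
  moreover have "noise_error \<sigma>A (ereal (sqrt \<gamma>)) \<le> \<gamma>"
    using prior_weight_nonneg[of "ereal (sqrt \<gamma>)"] prior_weight_le_one[of "ereal (sqrt \<gamma>)"] assms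
    by (simp add: noise_error_def power_le_one mult_left_le_one_le)
  moreover have "info_cost \<sigma>T (ereal (sqrt \<gamma>)) = - 1/2 * ln (\<gamma> / (\<sigma>T\<^sup>2 + \<gamma>))"
    using info_cost_finite(1)[of "sqrt \<gamma>"] assms by simp
  ultimately show ?thesis
    by (simp add: real_loss_def power_mult_distrib algebra_simps)
qed

end

section \<open>Societal bias\<close>

lemma abs_soc_bias [simp]: "\<bar>soc_bias \<mu>T \<sigma>T \<mu>A \<sigma>A \<gamma> \<Gamma> sel\<bar> = soc_bias \<mu>T \<sigma>T \<mu>A \<sigma>A \<gamma> \<Gamma> sel"
  by (simp add: soc_bias_def)

lemma AE_reflect_eq_if_radially_antitone:
  fixes g :: "real \<Rightarrow> real"
  assumes antitone: "\<And>x y. \<bar>x\<bar> < \<bar>y\<bar> \<Longrightarrow> g y \<le> g x"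
  shows "AE x in lborel. g (- x) = g x"
proof -
  define S where "S = {x. g (- x) \<noteq> g x}"
  define lo where "lo x = min (g x) (g (- x))" for x
  define hi where "hi x = max (g x) (g (- x))" for x
  have "\<exists>q\<in>\<rat>. lo x < q \<and> q < hi x" if "x \<in> S" for x
    using that Rats_dense_in_real[of "lo x" "hi x"] by (auto simp: S_def lo_def hi_def)
  then obtain r where r: "\<And>x. x \<in> S \<Longrightarrow> r x \<in> \<rat> \<and> lo x < r x \<and> r x < hi x"
    by metis
  \<comment> \<open>the intervals \<open>(lo x, hi x)\<close>, \<open>x \<in> S\<close>, \<open>x > 0\<close>, are disjoint, so \<open>r\<close> is injective there\<close>
  have hi_le_lo: "hi y \<le> lo x" if "\<bar>x\<bar> < \<bar>y\<bar>" for x y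
    using that antitone[of x y] antitone[of "- x" y] antitone[of x "- y"] antitone[of "- x" "- y"]
    by (simp add: lo_def hi_def)
  have "inj_on r (S \<inter> {0<..})"
  proof (rule inj_onI)
    fix x y assume "x \<in> S \<inter> {0<..}" "y \<in> S \<inter> {0<..}" "r x = r y"
    then show "x = y"
      using r[of x] r[of y] hi_le_lo[of x y] hi_le_lo[of y x] by (cases x y rule: linorder_cases) auto
  qed
  moreover have "r ` (S \<inter> {0<..}) \<subseteq> \<rat>"
    using r by auto
  ultimately have "countable (S \<inter> {0<..})"
    by (metis countable_image_inj_on countable_rat countable_subset)
  moreover have "S \<subseteq> (S \<inter> {0<..}) \<union> uminus ` (S \<inter> {0<..})"
  proof
    fix x assume "x \<in> S"
    then have "x \<noteq> 0" and "- x \<in> S"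
      by (auto simp: S_def)
    with \<open>x \<in> S\<close> show "x \<in> (S \<inter> {0<..}) \<union> uminus ` (S \<inter> {0<..})"
      by (cases "x > 0") (auto intro!: image_eqI[of x uminus "- x"])
  qed
  ultimately have "countable S"
    by (meson countable_Un countable_image countable_subset)
  then have "AE x in lborel. x \<notin> S"
    by (intro AE_not_in countable_imp_null_set_lborel)
  then show ?thesis
    by (simp add: S_def)
qed

locale noise_selection = bias_model +
  fixes \<mu>T :: real and sel :: "real \<Rightarrow> real \<Rightarrow> ereal"
  assumes sel_opt: "\<And>\<gamma> \<theta>. \<gamma> > 0 \<Longrightarrow> is_opt_noise \<sigma>T \<mu>A \<sigma>A \<gamma> \<theta> (sel \<gamma> \<theta>)"
    and sel_meas: "\<And>\<gamma>. \<gamma> > 0 \<Longrightarrow> sel \<gamma> \<in> borel_measurable borel"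
begin

definition prior_pull :: "real \<Rightarrow> ereal \<Rightarrow> real \<Rightarrow> real" where
  "prior_pull \<gamma> \<Gamma> \<theta> =
     (if ereal (real_loss \<sigma>T \<mu>A \<sigma>A \<gamma> \<theta> (sel \<gamma> \<theta>)) \<le> \<Gamma> then prior_weight \<sigma>A (sel \<gamma> \<theta>) else 0)"

lemma sel_pos: "\<gamma> > 0 \<Longrightarrow> sel \<gamma> \<theta> > 0"
  using opt_noise_pos sel_opt by blast

lemma prior_pull_measurable:
  assumes "\<gamma> > 0"
  shows "prior_pull \<gamma> \<Gamma> \<in> borel_measurable borel"
proof -
  note [measurable] = sel_meas[OF assms]
  show ?thesis
    unfolding prior_pull_def[abs_def] real_loss_def by measurable
qed

lemma prior_pull_nonneg: "\<gamma> > 0 \<Longrightarrow> 0 \<le> prior_pull \<gamma> \<Gamma> \<theta>"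
  and prior_pull_le_prior_weight: "\<gamma> > 0 \<Longrightarrow> prior_pull \<gamma> \<Gamma> \<theta> \<le> prior_weight \<sigma>A (sel \<gamma> \<theta>)"
  and prior_pull_le_one: "\<gamma> > 0 \<Longrightarrow> prior_pull \<gamma> \<Gamma> \<theta> \<le> 1"
  using prior_weight_nonneg[OF sel_pos] prior_weight_le_one[OF sel_pos]
  by (fastforce simp: prior_pull_def)+

lemma prior_pull_reflect_AE:
  assumes "\<gamma> > 0"
  shows "AE x in lborel. prior_pull \<gamma> \<Gamma> (\<mu>A - x) = prior_pull \<gamma> \<Gamma> (\<mu>A + x)"
proof -
  let ?loss = "\<lambda>\<theta>. real_loss \<sigma>T \<mu>A \<sigma>A \<gamma> \<theta> (sel \<gamma> \<theta>)"
  have reflect: "real_loss \<sigma>T \<mu>A \<sigma>A \<gamma> (\<mu>A - x) \<sigma> = real_loss \<sigma>T \<mu>A \<sigma>A \<gamma> (\<mu>A + x) \<sigma>" for x \<sigma>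
    by (simp add: real_loss_def)
  \<comment> \<open>the optimum at each of the two mirror points is admissible at the other\<close>
  have loss_eq: "?loss (\<mu>A - x) = ?loss (\<mu>A + x)" for x
    using opt_noise_real_loss_le[OF assms sel_opt[OF assms] sel_pos[OF assms], of "\<mu>A - x"]
      opt_noise_real_loss_le[OF assms sel_opt[OF assms] sel_pos[OF assms], of "\<mu>A + x"]
    by (simp add: reflect order_antisym)
  have "AE x in lborel. prior_weight \<sigma>A (sel \<gamma> (\<mu>A + - x)) = prior_weight \<sigma>A (sel \<gamma> (\<mu>A + x))"
    by (rule AE_reflect_eq_if_radially_antitone)
       (rule prior_weight_opt_antitone[OF assms sel_opt[OF assms] sel_opt[OF assms]], simp)
  then show ?thesis
    by eventually_elim (simp add: prior_pull_def loss_eq)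
qed

lemma soc_bias_eq:
  assumes "\<gamma> > 0"
  shows "soc_bias \<mu>T \<sigma>T \<mu>A \<sigma>A \<gamma> \<Gamma> (sel \<gamma>)
           = \<bar>\<integral>\<theta>. normal_density \<mu>T \<sigma>T \<theta> * (prior_pull \<gamma> \<Gamma> \<theta> * (\<theta> - \<mu>A)) \<partial>lborel\<bar>"
proof -
  let ?p = "normal_density \<mu>T \<sigma>T"
  note [measurable] = prior_pull_measurable[OF assms]
  have "cond_out_mean \<sigma>T \<mu>A \<sigma>A \<gamma> \<Gamma> \<theta> (sel \<gamma> \<theta>) = \<theta> - prior_pull \<gamma> \<Gamma> \<theta> * (\<theta> - \<mu>A)" for \<theta>
    using cond_out_mean_eq[OF \<sigma>A_pos sel_pos[OF assms]] loss_eq_real_loss[OF \<sigma>A_pos sel_pos[OF assms]]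
    by (simp add: prior_pull_def)
  then have "mean_out \<mu>T \<sigma>T \<mu>A \<sigma>A \<gamma> \<Gamma> (sel \<gamma>)
      = (\<integral>\<theta>. \<theta> - prior_pull \<gamma> \<Gamma> \<theta> * (\<theta> - \<mu>A) \<partial>density lborel ?p)"
    by (simp add: mean_out_def)
  also have "\<dots> = (\<integral>\<theta>. ?p \<theta> * \<theta> - ?p \<theta> * (prior_pull \<gamma> \<Gamma> \<theta> * (\<theta> - \<mu>A)) \<partial>lborel)"
    by (subst integral_density) (auto simp: right_diff_distrib)
  also have "\<dots> = \<mu>T - (\<integral>\<theta>. ?p \<theta> * (prior_pull \<gamma> \<Gamma> \<theta> * (\<theta> - \<mu>A)) \<partial>lborel)"
    using \<sigma>T_pos integrable_normal_moment_nz_1 integral_normal_moment_nz_1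
      integrable_normal_bounded_times_deviation[OF \<sigma>T_pos, of "prior_pull \<gamma> \<Gamma>"]
      prior_pull_nonneg[OF assms] prior_pull_le_one[OF assms]
    by (simp add: abs_le_iff)
  finally show ?thesis
    by (simp add: soc_bias_def)
qed

lemma prior_pull_infinity: "prior_pull \<gamma> \<infinity> \<theta> = prior_weight \<sigma>A (sel \<gamma> \<theta>)"
  by (simp add: prior_pull_def)

lemma soc_bias_le_ai_bias:
  assumes "\<gamma> > 0"
  shows "soc_bias \<mu>T \<sigma>T \<mu>A \<sigma>A \<gamma> \<Gamma> (sel \<gamma>) \<le> \<bar>\<mu>A - \<mu>T\<bar>"
proof -
  have "\<bar>\<integral>\<theta>. normal_density \<mu>T \<sigma>T \<theta> * (prior_pull \<gamma> \<Gamma> \<theta> * (\<theta> - \<mu>A)) \<partial>lborel\<bar>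
      \<le> \<bar>\<integral>\<theta>. normal_density \<mu>T \<sigma>T \<theta> * (1 * (\<theta> - \<mu>A)) \<partial>lborel\<bar>"
    by (rule abs_integral_normal_deviation_mono[OF \<sigma>T_pos prior_pull_measurable[OF assms]])
       (use prior_pull_nonneg prior_pull_le_one prior_pull_reflect_AE assms in auto)
  then show ?thesis
    using soc_bias_eq[OF assms] integral_normal_deviation[OF \<sigma>T_pos] by simp
qed

lemma soc_bias_mono_gamma:
  assumes "0 < \<gamma>1" and "\<gamma>1 \<le> \<gamma>2"
  shows "soc_bias \<mu>T \<sigma>T \<mu>A \<sigma>A \<gamma>1 \<infinity> (sel \<gamma>1) \<le> soc_bias \<mu>T \<sigma>T \<mu>A \<sigma>A \<gamma>2 \<infinity> (sel \<gamma>2)"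
proof (cases "\<gamma>1 = \<gamma>2")
  case False
  with assms have "\<gamma>1 < \<gamma>2" and "\<gamma>2 > 0"
    by simp_all
  have "prior_pull \<gamma>1 \<infinity> \<theta> \<le> prior_pull \<gamma>2 \<infinity> \<theta>" for \<theta>
    using prior_weight_opt_mono_gamma[OF assms(1) \<open>\<gamma>1 < \<gamma>2\<close> sel_opt sel_opt] assms(1) \<open>\<gamma>2 > 0\<close>
    by (simp add: prior_pull_infinity)
  then show ?thesis
    unfolding soc_bias_eq[OF assms(1)] soc_bias_eq[OF \<open>\<gamma>2 > 0\<close>]
    using prior_pull_nonneg prior_pull_le_one prior_pull_reflect_AE assms(1) \<open>\<gamma>2 > 0\<close>
    by (intro abs_integral_normal_deviation_mono[OF \<sigma>T_pos] prior_pull_measurable) auto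
qed simp

lemma soc_bias_le_integral:
  assumes "\<gamma> > 0" and "integrable lborel (\<lambda>\<theta>. normal_density \<mu>T \<sigma>T \<theta> * B \<theta>)"
    and "\<And>\<theta>. prior_pull \<gamma> \<Gamma> \<theta> * \<bar>\<theta> - \<mu>A\<bar> \<le> B \<theta>"
  shows "soc_bias \<mu>T \<sigma>T \<mu>A \<sigma>A \<gamma> \<Gamma> (sel \<gamma>) \<le> (\<integral>\<theta>. normal_density \<mu>T \<sigma>T \<theta> * B \<theta> \<partial>lborel)"
  unfolding soc_bias_eq[OF assms(1)]
proof (rule integral_abs_bound_integral[OF _ assms(2)])
  show "integrable lborel (\<lambda>\<theta>. normal_density \<mu>T \<sigma>T \<theta> * (prior_pull \<gamma> \<Gamma> \<theta> * (\<theta> - \<mu>A)))"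
    using prior_pull_nonneg[OF assms(1)] prior_pull_le_one[OF assms(1)]
    by (intro integrable_normal_bounded_times_deviation[OF \<sigma>T_pos prior_pull_measurable[OF assms(1)]])
       (simp add: abs_le_iff)
  show "\<bar>normal_density \<mu>T \<sigma>T \<theta> * (prior_pull \<gamma> \<Gamma> \<theta> * (\<theta> - \<mu>A))\<bar>
      \<le> normal_density \<mu>T \<sigma>T \<theta> * B \<theta>" for \<theta>
    using mult_left_mono[OF assms(3), of "normal_density \<mu>T \<sigma>T \<theta>" \<theta>] prior_pull_nonneg[OF assms(1)]
    by (simp add: abs_mult)
qed

lemma soc_bias_le_sqrt_Gamma:
  assumes "\<gamma> > 0" and "G \<ge> 0"
  shows "soc_bias \<mu>T \<sigma>T \<mu>A \<sigma>A \<gamma> (ereal G) (sel \<gamma>) \<le> sqrt G"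
proof -
  have "prior_pull \<gamma> (ereal G) \<theta> * \<bar>\<theta> - \<mu>A\<bar> \<le> sqrt G" for \<theta>
    using prior_weight_dist_le_sqrt_real_loss[OF sel_pos[OF assms(1), of \<theta>], where \<theta>=\<theta> and \<gamma>=\<gamma>] assms
    by (auto simp: prior_pull_def intro: order_trans real_sqrt_le_mono)
  then have "soc_bias \<mu>T \<sigma>T \<mu>A \<sigma>A \<gamma> (ereal G) (sel \<gamma>)
      \<le> (\<integral>\<theta>. normal_density \<mu>T \<sigma>T \<theta> * sqrt G \<partial>lborel)"
    using \<sigma>T_pos by (intro soc_bias_le_integral[OF assms(1)]) auto
  then show ?thesis
    using integral_normal_density[OF \<sigma>T_pos] by simp
qed

lemma soc_bias_small_gamma:
  assumes "\<gamma> > 0"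
  shows "soc_bias \<mu>T \<sigma>T \<mu>A \<sigma>A \<gamma> \<Gamma> (sel \<gamma>)
           \<le> \<gamma> / \<sigma>A\<^sup>2 * (\<integral>\<theta>. normal_density \<mu>T \<sigma>T \<theta> * \<bar>\<theta> - \<mu>A\<bar> ^ 1 \<partial>lborel)
             + sqrt (\<gamma> * (1 - ln (\<gamma> / (\<sigma>T\<^sup>2 + \<gamma>)) / 2))"
proof -
  let ?h = "\<gamma> * (1 - ln (\<gamma> / (\<sigma>T\<^sup>2 + \<gamma>)) / 2)"
  have "0 < \<gamma> / (\<sigma>T\<^sup>2 + \<gamma>)" and "\<gamma> / (\<sigma>T\<^sup>2 + \<gamma>) < 1"
    using info_cost_finite(2,3)[of "sqrt \<gamma>"] assms by simp_all
  then have "ln (\<gamma> / (\<sigma>T\<^sup>2 + \<gamma>)) < 0"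
    by simp
  then have "?h \<ge> 0"
    using assms by (intro mult_nonneg_nonneg) auto
  have pointwise: "prior_pull \<gamma> \<Gamma> \<theta> * \<bar>\<theta> - \<mu>A\<bar> \<le> \<gamma> / \<sigma>A\<^sup>2 * \<bar>\<theta> - \<mu>A\<bar> + sqrt ?h" for \<theta>
  proof -
    have "prior_pull \<gamma> \<Gamma> \<theta> * \<bar>\<theta> - \<mu>A\<bar> \<le> prior_weight \<sigma>A (sel \<gamma> \<theta>) * \<bar>\<theta> - \<mu>A\<bar>"
      using prior_pull_le_prior_weight[OF assms] by (rule mult_right_mono) simp
    also have "\<dots> \<le> sqrt (real_loss \<sigma>T \<mu>A \<sigma>A \<gamma> \<theta> (sel \<gamma> \<theta>))"
      using sel_pos[OF assms] assms by (intro prior_weight_dist_le_sqrt_real_loss) auto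
    also have "\<dots> \<le> sqrt (real_loss \<sigma>T \<mu>A \<sigma>A \<gamma> \<theta> (ereal (sqrt \<gamma>)))"
      using opt_noise_real_loss_le[OF assms sel_opt[OF assms]] assms by simp
    also have "\<dots> \<le> sqrt ((\<gamma> / \<sigma>A\<^sup>2 * \<bar>\<theta> - \<mu>A\<bar>)\<^sup>2 + ?h)"
      using real_loss_sqrt_le[OF assms] by simp
    also have "\<dots> \<le> \<gamma> / \<sigma>A\<^sup>2 * \<bar>\<theta> - \<mu>A\<bar> + sqrt ?h"
      using sqrt_add_le_add_sqrt[of "(\<gamma> / \<sigma>A\<^sup>2 * \<bar>\<theta> - \<mu>A\<bar>)\<^sup>2" ?h] \<open>?h \<ge> 0\<close> assms by simp
    finally show ?thesis .
  qed
  have split: "normal_density \<mu>T \<sigma>T \<theta> * (\<gamma> / \<sigma>A\<^sup>2 * \<bar>\<theta> - \<mu>A\<bar> + sqrt ?h)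
      = \<gamma> / \<sigma>A\<^sup>2 * (normal_density \<mu>T \<sigma>T \<theta> * \<bar>\<theta> - \<mu>A\<bar> ^ 1)
        + sqrt ?h * normal_density \<mu>T \<sigma>T \<theta>" for \<theta>
    by (simp add: algebra_simps)
  note integrable_moment = integrable_normal_abs_power[OF \<sigma>T_pos, of \<mu>T \<mu>A 1]
  have "integrable lborel (\<lambda>\<theta>. normal_density \<mu>T \<sigma>T \<theta> * (\<gamma> / \<sigma>A\<^sup>2 * \<bar>\<theta> - \<mu>A\<bar> + sqrt ?h))"
    unfolding split using integrable_moment \<sigma>T_pos by simp
  then have "soc_bias \<mu>T \<sigma>T \<mu>A \<sigma>A \<gamma> \<Gamma> (sel \<gamma>)
      \<le> (\<integral>\<theta>. normal_density \<mu>T \<sigma>T \<theta> * (\<gamma> / \<sigma>A\<^sup>2 * \<bar>\<theta> - \<mu>A\<bar> + sqrt ?h) \<partial>lborel)"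
    using pointwise by (rule soc_bias_le_integral[OF assms])
  also have "\<dots> = \<gamma> / \<sigma>A\<^sup>2 * (\<integral>\<theta>. normal_density \<mu>T \<sigma>T \<theta> * \<bar>\<theta> - \<mu>A\<bar> ^ 1 \<partial>lborel) + sqrt ?h"
    unfolding split using integrable_moment integral_normal_density[OF \<sigma>T_pos] \<sigma>T_pos by simp
  finally show ?thesis .
qed

lemma soc_bias_large_gamma:
  assumes "\<gamma> > 0"
  shows "\<bar>soc_bias \<mu>T \<sigma>T \<mu>A \<sigma>A \<gamma> \<infinity> (sel \<gamma>) - \<bar>\<mu>A - \<mu>T\<bar>\<bar>
           \<le> 2 * (\<sigma>A\<^sup>2 + \<sigma>T\<^sup>2) / \<sigma>T\<^sup>2
               * (\<integral>\<theta>. normal_density \<mu>T \<sigma>T \<theta> * \<bar>\<theta> - \<mu>A\<bar> ^ 3 \<partial>lborel) / \<gamma>"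
proof -
  let ?p = "normal_density \<mu>T \<sigma>T" and ?K = "2 * (\<sigma>A\<^sup>2 + \<sigma>T\<^sup>2) / \<sigma>T\<^sup>2"
  let ?I = "\<lambda>f. \<integral>\<theta>. ?p \<theta> * (f \<theta> * (\<theta> - \<mu>A)) \<partial>lborel"
  have "integrable lborel (\<lambda>\<theta>. ?p \<theta> * (f \<theta> * (\<theta> - \<mu>A)))"
    if "f \<in> borel_measurable borel" "\<And>\<theta>. 0 \<le> f \<theta> \<and> f \<theta> \<le> 1" for f
    using that by (intro integrable_normal_bounded_times_deviation[OF \<sigma>T_pos]) (auto simp: abs_le_iff)
  note int_pull = this[of "prior_pull \<gamma> \<infinity>"] and int_one = this[of "\<lambda>_. 1"]
  have "\<bar>?I (prior_pull \<gamma> \<infinity>) - ?I (\<lambda>_. 1)\<bar>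
      = \<bar>\<integral>\<theta>. ?p \<theta> * (prior_pull \<gamma> \<infinity> \<theta> * (\<theta> - \<mu>A)) - ?p \<theta> * (1 * (\<theta> - \<mu>A)) \<partial>lborel\<bar>"
    using int_pull int_one prior_pull_measurable[OF assms] prior_pull_nonneg[OF assms]
      prior_pull_le_one[OF assms] by simp
  also have "\<dots> \<le> (\<integral>\<theta>. ?K / \<gamma> * (?p \<theta> * \<bar>\<theta> - \<mu>A\<bar> ^ 3) \<partial>lborel)"
  proof (rule integral_abs_bound_integral)
    show "integrable lborel (\<lambda>\<theta>. ?p \<theta> * (prior_pull \<gamma> \<infinity> \<theta> * (\<theta> - \<mu>A)) - ?p \<theta> * (1 * (\<theta> - \<mu>A)))"
      using int_pull int_one prior_pull_measurable[OF assms] prior_pull_nonneg[OF assms]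
        prior_pull_le_one[OF assms] by simp
    show "integrable lborel (\<lambda>\<theta>. ?K / \<gamma> * (?p \<theta> * \<bar>\<theta> - \<mu>A\<bar> ^ 3))"
      using integrable_normal_abs_power[OF \<sigma>T_pos] by simp
    fix \<theta>
    have "?p \<theta> * (prior_pull \<gamma> \<infinity> \<theta> * (\<theta> - \<mu>A)) - ?p \<theta> * (1 * (\<theta> - \<mu>A))
        = - (?p \<theta> * ((1 - prior_weight \<sigma>A (sel \<gamma> \<theta>)) * (\<theta> - \<mu>A)))"
      by (simp add: prior_pull_infinity algebra_simps)
    then have "\<bar>?p \<theta> * (prior_pull \<gamma> \<infinity> \<theta> * (\<theta> - \<mu>A)) - ?p \<theta> * (1 * (\<theta> - \<mu>A))\<bar>
        = ?p \<theta> * ((1 - prior_weight \<sigma>A (sel \<gamma> \<theta>)) * \<bar>\<theta> - \<mu>A\<bar>)"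
      using prior_weight_le_one[OF sel_pos[OF assms]] by (simp add: abs_mult)
    also have "\<dots> \<le> ?p \<theta> * (?K * \<bar>\<theta> - \<mu>A\<bar> ^ 3 / \<gamma>)"
      by (intro mult_left_mono prior_weight_opt_large_gamma[OF assms sel_opt[OF assms]]) simp
    finally show "\<bar>?p \<theta> * (prior_pull \<gamma> \<infinity> \<theta> * (\<theta> - \<mu>A)) - ?p \<theta> * (1 * (\<theta> - \<mu>A))\<bar>
        \<le> ?K / \<gamma> * (?p \<theta> * \<bar>\<theta> - \<mu>A\<bar> ^ 3)"
      by (simp add: mult.left_commute)
  qed
  also have "\<dots> = ?K * (\<integral>\<theta>. ?p \<theta> * \<bar>\<theta> - \<mu>A\<bar> ^ 3 \<partial>lborel) / \<gamma>"
    by simp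
  finally show ?thesis
    using soc_bias_eq[OF assms] integral_normal_deviation[OF \<sigma>T_pos, of \<mu>T \<mu>A]
      abs_triangle_ineq3[of "?I (prior_pull \<gamma> \<infinity>)" "\<mu>T - \<mu>A"]
    by (simp add: abs_minus_commute)
qed

lemma soc_bias_tendsto_zero_small_gamma:
  "((\<lambda>\<gamma>. soc_bias \<mu>T \<sigma>T \<mu>A \<sigma>A \<gamma> \<Gamma> (sel \<gamma>)) \<longlongrightarrow> 0) (at_right 0)"
proof (rule Lim_null_comparison)
  define M where "M = (\<integral>\<theta>. normal_density \<mu>T \<sigma>T \<theta> * \<bar>\<theta> - \<mu>A\<bar> ^ 1 \<partial>lborel)"
  show "\<forall>\<^sub>F \<gamma> in at_right 0. norm (soc_bias \<mu>T \<sigma>T \<mu>A \<sigma>A \<gamma> \<Gamma> (sel \<gamma>))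
          \<le> \<gamma> / \<sigma>A\<^sup>2 * M + sqrt (\<gamma> * (1 - ln (\<gamma> / (\<sigma>T\<^sup>2 + \<gamma>)) / 2))"
    using eventually_at_right_less
    by (rule eventually_mono) (use soc_bias_small_gamma in \<open>simp add: M_def\<close>)
  show "((\<lambda>\<gamma>. \<gamma> / \<sigma>A\<^sup>2 * M + sqrt (\<gamma> * (1 - ln (\<gamma> / (\<sigma>T\<^sup>2 + \<gamma>)) / 2))) \<longlongrightarrow> 0) (at_right 0)"
    using \<sigma>T_pos \<sigma>A_pos by real_asymp
qed

lemma soc_bias_tendsto_zero_small_Gamma:
  assumes "\<gamma> > 0"
  shows "((\<lambda>G. soc_bias \<mu>T \<sigma>T \<mu>A \<sigma>A \<gamma> (ereal G) (sel \<gamma>)) \<longlongrightarrow> 0) (at_right 0)"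
proof (rule Lim_null_comparison)
  show "\<forall>\<^sub>F G in at_right 0. norm (soc_bias \<mu>T \<sigma>T \<mu>A \<sigma>A \<gamma> (ereal G) (sel \<gamma>)) \<le> sqrt G"
    using eventually_at_right_less
    by (rule eventually_mono) (simp add: soc_bias_le_sqrt_Gamma[OF assms])
  show "(sqrt \<longlongrightarrow> 0) (at_right 0)"
    by real_asymp
qed

lemma soc_bias_tendsto_ai_bias_large_gamma:
  "((\<lambda>\<gamma>. soc_bias \<mu>T \<sigma>T \<mu>A \<sigma>A \<gamma> \<infinity> (sel \<gamma>)) \<longlongrightarrow> \<bar>\<mu>A - \<mu>T\<bar>) at_top"
proof (rule LIM_zero_cancel, rule Lim_null_comparison)
  define C where "C = 2 * (\<sigma>A\<^sup>2 + \<sigma>T\<^sup>2) / \<sigma>T\<^sup>2 * (\<integral>\<theta>. normal_density \<mu>T \<sigma>T \<theta> * \<bar>\<theta> - \<mu>A\<bar> ^ 3 \<partial>lborel)"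
  show "\<forall>\<^sub>F \<gamma> in at_top. norm (soc_bias \<mu>T \<sigma>T \<mu>A \<sigma>A \<gamma> \<infinity> (sel \<gamma>) - \<bar>\<mu>A - \<mu>T\<bar>) \<le> C / \<gamma>"
    using eventually_gt_at_top[of 0]
    by (rule eventually_mono) (use soc_bias_large_gamma in \<open>simp add: C_def\<close>)
  show "((\<lambda>\<gamma>. C / \<gamma>) \<longlongrightarrow> 0) at_top"
    by real_asymp
qed

end

theorem theorem3:
  fixes \<mu>T \<sigma>T \<mu>A \<sigma>A :: real
    and sel :: "real \<Rightarrow> real \<Rightarrow> ereal"
  assumes "\<sigma>T > 0" and "\<sigma>A > 0"
    and sel_opt: "\<And>\<gamma> \<theta>. \<gamma> > 0 \<Longrightarrow> is_opt_noise \<sigma>T \<mu>A \<sigma>A \<gamma> \<theta> (sel \<gamma> \<theta>)"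
    and sel_meas: "\<And>\<gamma>. \<gamma> > 0 \<Longrightarrow> sel \<gamma> \<in> borel_measurable borel"
  shows "(\<forall>\<gamma> \<Gamma>. \<gamma> > 0 \<longrightarrow> \<Gamma> > 0 \<longrightarrow>
            soc_bias \<mu>T \<sigma>T \<mu>A \<sigma>A \<gamma> \<Gamma> (sel \<gamma>) \<le> \<bar>\<mu>A - \<mu>T\<bar>)
       \<and> (\<forall>\<Gamma>. \<Gamma> > 0 \<longrightarrow>
            ((\<lambda>\<gamma>. soc_bias \<mu>T \<sigma>T \<mu>A \<sigma>A \<gamma> \<Gamma> (sel \<gamma>)) \<longlongrightarrow> 0) (at_right 0))
       \<and> (\<forall>\<gamma>. \<gamma> > 0 \<longrightarrow>
            ((\<lambda>\<Gamma>. soc_bias \<mu>T \<sigma>T \<mu>A \<sigma>A \<gamma> (ereal \<Gamma>) (sel \<gamma>)) \<longlongrightarrow> 0) (at_right 0))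
       \<and> ((\<lambda>\<gamma>. soc_bias \<mu>T \<sigma>T \<mu>A \<sigma>A \<gamma> \<infinity> (sel \<gamma>)) \<longlongrightarrow> \<bar>\<mu>A - \<mu>T\<bar>) at_top
       \<and> (\<forall>\<gamma>1 \<gamma>2. 0 < \<gamma>1 \<longrightarrow> \<gamma>1 \<le> \<gamma>2 \<longrightarrow>
            soc_bias \<mu>T \<sigma>T \<mu>A \<sigma>A \<gamma>1 \<infinity> (sel \<gamma>1) \<le> soc_bias \<mu>T \<sigma>T \<mu>A \<sigma>A \<gamma>2 \<infinity> (sel \<gamma>2))"
proof -
  interpret noise_selection \<sigma>T \<mu>A \<sigma>A \<mu>T sel
    using assms by unfold_locales
  show ?thesis
    using soc_bias_le_ai_bias soc_bias_tendsto_zero_small_gamma soc_bias_tendsto_zero_small_Gamma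
      soc_bias_tendsto_ai_bias_large_gamma soc_bias_mono_gamma
    by blast
qed

end
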